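(* For $\tau^1,\tau^2$ both aromas with free edges, or both trees with free edges, $\langle\delta\tau^1,\tau^2\rangle=\langle\tau^1,\overline\delta\tau^2\rangle$. Moreover, for every aroma or tree with free edges $\tau$, $\overline\Phi(\delta\tau)=\partial\,\overline\Phi(\tau)$.
   Context: Fix a finite set $C$ and a field of characteristic zero. A tree (resp. aroma) is a finite connected directed graph with $C$-decorated vertices in which every vertex has exactly one outgoing edge except one root vertex with none (resp. every vertex has exactly one outgoing edge); an aroma contains a unique cycle. A tree or aroma with free edges additionally assigns to each vertex $v$ a number $r_v\ge0$ of free edges (dangling edges ending at $v$); objects are taken up to isomorphism preserving decorations and the $r_v$. $\overline{A_0}$ and $\overline T$ are the spans of aromas and trees with free edges. The symmetry factor $\sigma(\tau)$ is the number of automorphisms preserving decorations and free-edge numbers; the pairing is $\langle\tau,\tau'\rangle=\sigma(\tau)\mathbf 1_{\tau=\tau'}$. For a vertex $v$, $\delta_v$ adds one free edge at $v$ and $\overline\delta_v$ removes one free edge at $v$ (giving $0$ if $r_v=0$); $\delta=\sum_v\delta_v$, $\overline\delta=\sum_v\overline\delta_v$, extended linearly. Let $f(v)$ be the number of (non-free) edges ending at $v$. The extended fertility map is $\overline\Phi(\tau)=\prod_vx^{d(v)}_{f(v)+r_v-1}$, a monomial in variables $x^a_j$ ($a\in C$, $j\ge-1$); for aromas it is regarded in the space $\overline{M_0}$ and for trees in the space $\overline{M_{-1}}$ (formal copies of spans of monomials). $\partial$ is the derivation $\partial x^a_j=x^a_{j+1}$, acting on each of these spaces. *)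

theory Defs
  imports Main "HOL-Library.FuncSet" "HOL-Library.Multiset"
begin

text \<open>A raw object has vertex set {0..<nv t}; dec t v is the decoration (in the finite
 type 'c playing the role of C); succ t v is the target of the unique outgoing edge of v
 (None for the root of a tree); fr t v is the number r_v of free edges ending at v.
 Values outside {0..<nv t} are irrelevant.\<close>

datatype 'c fobj = FObj (nv: nat) (dec: "nat \<Rightarrow> 'c") (succ: "nat \<Rightarrow> nat option") (fr: "nat \<Rightarrow> nat")

definition edge_rel :: "'c fobj \<Rightarrow> (nat \<times> nat) set" where
  "edge_rel t = {(u, w). u < nv t \<and> succ t u = Some w}"

definition connected_fobj :: "'c fobj \<Rightarrow> bool" where
  "connected_fobj t \<longleftrightarrow>
     (\<forall>u<nv t. \<forall>w<nv t. (u, w) \<in> (edge_rel t \<union> (edge_rel t)\<inverse>)\<^sup>*)"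

definition is_aroma :: "'c fobj \<Rightarrow> bool" where
  "is_aroma t \<longleftrightarrow> 0 < nv t \<and> (\<forall>v<nv t. \<exists>w<nv t. succ t v = Some w) \<and> connected_fobj t"

definition is_tree :: "'c fobj \<Rightarrow> bool" where
  "is_tree t \<longleftrightarrow> 0 < nv t
     \<and> (\<exists>!\<rho>. \<rho> < nv t \<and> succ t \<rho> = None)
     \<and> (\<forall>v<nv t. \<forall>w. succ t v = Some w \<longrightarrow> w < nv t)
     \<and> connected_fobj t"

definition is_iso :: "'c fobj \<Rightarrow> 'c fobj \<Rightarrow> (nat \<Rightarrow> nat) \<Rightarrow> bool" where
  "is_iso t t' \<phi> \<longleftrightarrow> bij_betw \<phi> {..<nv t} {..<nv t'} \<and>
     (\<forall>v<nv t. dec t' (\<phi> v) = dec t v \<and> fr t' (\<phi> v) = fr t v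
              \<and> succ t' (\<phi> v) = map_option \<phi> (succ t v))"

definition iso :: "'c fobj \<Rightarrow> 'c fobj \<Rightarrow> bool" where
  "iso t t' \<longleftrightarrow> (\<exists>\<phi>. is_iso t t' \<phi>)"

definition iso_class :: "'c fobj \<Rightarrow> 'c fobj set" where
  "iso_class t = {t'. iso t t'}"

definition sigma :: "'c fobj \<Rightarrow> nat" where
  "sigma t = card {\<phi> \<in> {..<nv t} \<rightarrow>\<^sub>E {..<nv t}. is_iso t t \<phi>}"

definition rep :: "'c fobj set \<Rightarrow> 'c fobj" where
  "rep X = (SOME t. t \<in> X)"

text \<open>Elements of the span of isomorphism classes are functions 'c fobj set => 'k
 (only nonzero on isomorphism classes, finitely many).\<close>

definition basis :: "'c fobj \<Rightarrow> 'c fobj set \<Rightarrow> 'k::field" where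
  "basis t = (\<lambda>X. if X = iso_class t then 1 else 0)"

definition pairing :: "('c fobj set \<Rightarrow> 'k::field) \<Rightarrow> ('c fobj set \<Rightarrow> 'k) \<Rightarrow> 'k" where
  "pairing f g = (\<Sum>X\<in>{X. f X \<noteq> 0 \<and> g X \<noteq> 0}. f X * g X * of_nat (sigma (rep X)))"

definition add_free :: "'c fobj \<Rightarrow> nat \<Rightarrow> 'c fobj" where
  "add_free t v = FObj (nv t) (dec t) (succ t) ((fr t)(v := fr t v + 1))"

definition rem_free :: "'c fobj \<Rightarrow> nat \<Rightarrow> 'c fobj" where
  "rem_free t v = FObj (nv t) (dec t) (succ t) ((fr t)(v := fr t v - 1))"

definition delta :: "'c fobj \<Rightarrow> 'c fobj set \<Rightarrow> 'k::field" where
  "delta t = (\<lambda>X. \<Sum>v<nv t. basis (add_free t v) X)"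

definition deltabar :: "'c fobj \<Rightarrow> 'c fobj set \<Rightarrow> 'k::field" where
  "deltabar t = (\<lambda>X. \<Sum>v<nv t. if fr t v = 0 then 0 else basis (rem_free t v) X)"

text \<open>A monomial in the variables x^a_j is a multiset of pairs (a, j); a polynomial is
 a (finitely supported) function from monomials to 'k.\<close>

definition fertility :: "'c fobj \<Rightarrow> nat \<Rightarrow> nat" where
  "fertility t v = card {u. u < nv t \<and> succ t u = Some v}"

definition Phi :: "'c fobj \<Rightarrow> ('c \<times> int) multiset" where
  "Phi t = image_mset (\<lambda>v. (dec t v, int (fertility t v) + int (fr t v) - 1)) (mset_set {..<nv t})"

definition mono :: "('c \<times> int) multiset \<Rightarrow> ('c \<times> int) multiset \<Rightarrow> 'k::field" where
  "mono m = (\<lambda>m'. if m' = m then 1 else 0)"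

definition PhiL :: "('c fobj set \<Rightarrow> 'k::field) \<Rightarrow> ('c \<times> int) multiset \<Rightarrow> 'k" where
  "PhiL f = (\<lambda>m. \<Sum>X\<in>{X. f X \<noteq> 0}. f X * mono (Phi (rep X)) m)"

text \<open>The derivation with \<partial> x^a_j = x^a_(j+1): on a monomial and extended linearly.\<close>

definition Dmon :: "('c \<times> int) multiset \<Rightarrow> ('c \<times> int) multiset \<Rightarrow> 'k::field" where
  "Dmon m = (\<lambda>m'. \<Sum>y\<in>set_mset m.
      of_nat (count m y) * mono (m - {#y#} + {#(fst y, snd y + 1)#}) m')"

definition Dpoly :: "(('c \<times> int) multiset \<Rightarrow> 'k::field) \<Rightarrow> ('c \<times> int) multiset \<Rightarrow> 'k" where
  "Dpoly P = (\<lambda>m'. \<Sum>m\<in>{m. P m \<noteq> 0}. P m * Dmon m m')"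

end

theory Submission
  imports Defs
begin

text \<open>Both identities use only that every edge of an aroma or a tree ends inside its vertex set.

Adjointness is a double count. Pairs \<open>(v, \<phi>)\<close> where \<open>\<phi>\<close> is an isomorphism from \<open>\<tau>\<^sup>1\<close> with a
free edge added at \<open>v\<close> onto \<open>\<tau>\<^sup>2\<close> correspond, via \<open>w = \<phi> v\<close>, to pairs \<open>(w, \<phi>)\<close> where
\<open>\<phi>\<close> is an isomorphism from \<open>\<tau>\<^sup>1\<close> onto \<open>\<tau>\<^sup>2\<close> with a free edge removed at \<open>w\<close>. Grouping the
first set by \<open>v\<close> counts \<open>\<sigma>(\<tau>\<^sup>2)\<close> times the coefficient of \<open>\<tau>\<^sup>2\<close> in \<open>\<delta>\<tau>\<^sup>1\<close>, grouping the
second by \<open>w\<close> counts \<open>\<sigma>(\<tau>\<^sup>1)\<close> times the coefficient of \<open>\<tau>\<^sup>1\<close> in \<open>deltabar \<tau>\<^sup>2\<close>.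

Adding a free edge at \<open>v\<close> raises the lower index of the variable of \<open>v\<close> in \<open>\<Phi>(\<tau>)\<close> by one and
leaves all other variables alone, so summing over \<open>v\<close> is the Leibniz rule for \<open>\<partial>\<close> on the
monomial \<open>\<Phi>(\<tau>)\<close>.\<close>

definition succ_closed :: "'c fobj \<Rightarrow> bool" where
  "succ_closed t \<longleftrightarrow> (\<forall>v<nv t. \<forall>w. succ t v = Some w \<longrightarrow> w < nv t)"

lemma succ_closed_if_aroma: "is_aroma t \<Longrightarrow> succ_closed t"
  unfolding is_aroma_def succ_closed_def by force

lemma succ_closed_if_tree: "is_tree t \<Longrightarrow> succ_closed t"
  unfolding is_tree_def succ_closed_def by blast

lemma add_free_sel [simp]:
  "nv (add_free t v) = nv t" "dec (add_free t v) = dec t" "succ (add_free t v) = succ t"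
  "fr (add_free t v) = (fr t)(v := fr t v + 1)"
  by (simp_all add: add_free_def)

lemma rem_free_sel [simp]:
  "nv (rem_free t v) = nv t" "dec (rem_free t v) = dec t" "succ (rem_free t v) = succ t"
  "fr (rem_free t v) = (fr t)(v := fr t v - 1)"
  by (simp_all add: rem_free_def)

lemma succ_closed_add_free [simp]: "succ_closed (add_free t v) = succ_closed t"
  by (simp add: succ_closed_def)

lemma succ_closed_rem_free [simp]: "succ_closed (rem_free t v) = succ_closed t"
  by (simp add: succ_closed_def)

lemma is_iso_iff:
  "is_iso a b \<phi> \<longleftrightarrow> bij_betw \<phi> {..<nv a} {..<nv b} \<and> (\<forall>v<nv a. dec b (\<phi> v) = dec a v) \<and>
    (\<forall>v<nv a. fr b (\<phi> v) = fr a v) \<and> (\<forall>v<nv a. succ b (\<phi> v) = map_option \<phi> (succ a v))"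
  unfolding is_iso_def by blast

lemma is_iso_bij_betw: "is_iso a b \<phi> \<Longrightarrow> bij_betw \<phi> {..<nv a} {..<nv b}"
  by (simp add: is_iso_def)

lemma is_iso_less: "is_iso a b \<phi> \<Longrightarrow> v < nv a \<Longrightarrow> \<phi> v < nv b"
  using is_iso_bij_betw bij_betw_apply by fastforce

lemma is_iso_id: "is_iso t t id"
  by (simp add: is_iso_def option.map_id)

lemma is_iso_comp:
  assumes "is_iso a b \<phi>" "is_iso b c \<psi>"
  shows "is_iso a c (\<psi> \<circ> \<phi>)"
  using assms is_iso_less[OF assms(1)] bij_betw_trans[OF is_iso_bij_betw is_iso_bij_betw]
  unfolding is_iso_def by (simp add: option.map_comp)

lemma is_iso_cong:
  assumes "succ_closed a" "is_iso a b \<phi>" "\<And>v. v < nv a \<Longrightarrow> \<psi> v = \<phi> v"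
  shows "is_iso a b \<psi>"
proof -
  have "map_option \<psi> (succ a v) = map_option \<phi> (succ a v)" if "v < nv a" for v
    using assms that unfolding succ_closed_def by (cases "succ a v") auto
  then show ?thesis
    using assms bij_betw_cong[of "{..<nv a}" \<psi> \<phi>] unfolding is_iso_def by auto
qed

lemma is_iso_inv_into:
  assumes closed: "succ_closed a" and \<phi>: "is_iso a b \<phi>"
  shows "is_iso b a (inv_into {..<nv a} \<phi>)"
proof -
  let ?\<psi> = "inv_into {..<nv a} \<phi>"
  have bij: "bij_betw \<phi> {..<nv a} {..<nv b}" using \<phi> by (rule is_iso_bij_betw)
  have inv: "?\<psi> (\<phi> v) = v" if "v < nv a" for v
    using bij that by (simp add: bij_betw_def)
  have "dec a (?\<psi> w) = dec b w \<and> fr a (?\<psi> w) = fr b w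
      \<and> succ a (?\<psi> w) = map_option ?\<psi> (succ b w)" if "w < nv b" for w
  proof -
    obtain v where v: "v < nv a" "w = \<phi> v"
      using bij \<open>w < nv b\<close> by (metis bij_betw_iff_bijections lessThan_iff)
    have "map_option ?\<psi> (map_option \<phi> (succ a v)) = succ a v"
      using closed v inv unfolding succ_closed_def by (cases "succ a v") auto
    then show ?thesis using \<phi> v inv unfolding is_iso_def by auto
  qed
  then show ?thesis using bij_betw_inv_into[OF bij] unfolding is_iso_def by blast
qed

lemma succ_closed_is_iso:
  assumes closed: "succ_closed a" and \<phi>: "is_iso a b \<phi>"
  shows "succ_closed b"
  unfolding succ_closed_def
proof (intro allI impI)
  fix w w' assume "w < nv b" and w': "succ b w = Some w'"
  then obtain v where v: "v < nv a" "w = \<phi> v"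
    using is_iso_bij_betw[OF \<phi>] by (metis bij_betw_iff_bijections lessThan_iff)
  then have "succ b w = map_option \<phi> (succ a v)" using \<phi> by (simp add: is_iso_def)
  with w' closed v show "w' < nv b"
    using is_iso_less[OF \<phi>] unfolding succ_closed_def by (cases "succ a v") auto
qed

lemma iso_refl: "iso t t"
  using is_iso_id iso_def by blast

lemma iso_sym: "succ_closed a \<Longrightarrow> iso a b \<Longrightarrow> iso b a"
  using is_iso_inv_into iso_def by blast

lemma iso_trans: "iso a b \<Longrightarrow> iso b c \<Longrightarrow> iso a c"
  unfolding iso_def using is_iso_comp by blast

lemma iso_class_eq_iff:
  assumes "succ_closed a" "succ_closed b"
  shows "iso_class a = iso_class b \<longleftrightarrow> iso a b"
  using assms iso_refl iso_sym iso_trans unfolding iso_class_def by blast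

lemma iso_rep_iso_class: "iso t (rep (iso_class t))"
proof -
  have "t \<in> iso_class t" by (simp add: iso_class_def iso_refl)
  then have "rep (iso_class t) \<in> iso_class t" unfolding rep_def by (rule someI)
  then show ?thesis by (simp add: iso_class_def)
qed

definition isos :: "'c fobj \<Rightarrow> 'c fobj \<Rightarrow> (nat \<Rightarrow> nat) set" where
  "isos a b = {\<phi> \<in> {..<nv a} \<rightarrow>\<^sub>E {..<nv b}. is_iso a b \<phi>}"

lemma sigma_eq_card_isos: "sigma t = card (isos t t)"
  by (simp add: sigma_def isos_def)

lemma finite_isos: "finite (isos a b)"
proof -
  have "finite ({..<nv a} \<rightarrow>\<^sub>E {..<nv b})" by (simp add: finite_PiE)
  then show ?thesis unfolding isos_def by simp
qed

lemma isos_nonempty_iff: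
  assumes "succ_closed a"
  shows "isos a b \<noteq> {} \<longleftrightarrow> iso a b"
proof
  assume "iso a b"
  then obtain \<phi> where \<phi>: "is_iso a b \<phi>" by (auto simp: iso_def)
  have "is_iso a b (restrict \<phi> {..<nv a})" by (rule is_iso_cong[OF assms \<phi>]) simp
  then have "restrict \<phi> {..<nv a} \<in> isos a b"
    using is_iso_less[OF \<phi>] by (auto simp: isos_def)
  then show "isos a b \<noteq> {}" by blast
qed (auto simp: isos_def iso_def)

lemma card_isos_le:
  assumes closed: "succ_closed a'" and \<alpha>: "is_iso a' a \<alpha>" and \<beta>: "is_iso b b' \<beta>"
  shows "card (isos a b) \<le> card (isos a' b')"
proof (rule card_inj_on_le[OF _ _ finite_isos])
  let ?F = "\<lambda>\<phi>. restrict (\<beta> \<circ> \<phi> \<circ> \<alpha>) {..<nv a'}"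
  show "?F ` isos a b \<subseteq> isos a' b'"
  proof
    fix \<chi> assume "\<chi> \<in> ?F ` isos a b"
    then obtain \<phi> where \<phi>: "\<phi> \<in> isos a b" and \<chi>: "\<chi> = ?F \<phi>" by auto
    then have "is_iso a b \<phi>" by (simp add: isos_def)
    then have "is_iso a' b' (\<beta> \<circ> \<phi> \<circ> \<alpha>)"
      using is_iso_comp[OF is_iso_comp[OF \<alpha>] \<beta>] by (simp add: o_assoc)
    then have "is_iso a' b' \<chi>" unfolding \<chi> by (rule is_iso_cong[OF closed]) simp
    moreover have "\<chi> \<in> {..<nv a'} \<rightarrow>\<^sub>E {..<nv b'}"
      using \<phi> is_iso_less[OF \<alpha>] is_iso_less[OF \<beta>] unfolding \<chi> isos_def by (auto simp: PiE_iff)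
    ultimately show "\<chi> \<in> isos a' b'" by (simp add: isos_def)
  qed
  show "inj_on ?F (isos a b)"
  proof (rule inj_onI)
    fix \<phi> \<phi>' assume \<phi>: "\<phi> \<in> isos a b" and \<phi>': "\<phi>' \<in> isos a b" and eq: "?F \<phi> = ?F \<phi>'"
    have "\<phi> x = \<phi>' x" if "x < nv a" for x
    proof -
      obtain y where y: "y < nv a'" "x = \<alpha> y"
        using is_iso_bij_betw[OF \<alpha>] \<open>x < nv a\<close> by (metis bij_betw_iff_bijections lessThan_iff)
      then have "\<beta> (\<phi> x) = \<beta> (\<phi>' x)" using fun_cong[OF eq, of y] by simp
      moreover have "\<phi> x < nv b" "\<phi>' x < nv b" using \<phi> \<phi>' that by (auto simp: isos_def)
      ultimately show ?thesis
        using is_iso_bij_betw[OF \<beta>] by (auto simp: bij_betw_def dest: inj_onD)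
    qed
    then show "\<phi> = \<phi>'"
      using \<phi> \<phi>' by (intro PiE_ext[of _ "{..<nv a}" "\<lambda>_. {..<nv b}"]) (auto simp: isos_def)
  qed
qed

lemma card_isos_iso_invariant:
  assumes a: "succ_closed a" and b: "succ_closed b" and \<alpha>: "is_iso a a' \<alpha>" and \<beta>: "is_iso b b' \<beta>"
  shows "card (isos a' b') = card (isos a b)"
proof (rule antisym)
  show "card (isos a' b') \<le> card (isos a b)"
    using card_isos_le[OF a \<alpha> is_iso_inv_into[OF b \<beta>]] .
  show "card (isos a b) \<le> card (isos a' b')"
    using card_isos_le[OF succ_closed_is_iso[OF a \<alpha>] is_iso_inv_into[OF a \<alpha>] \<beta>] .
qed

lemma sigma_iso:
  assumes "succ_closed a" "iso a b"
  shows "sigma b = sigma a"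
proof -
  obtain \<phi> where \<phi>: "is_iso a b \<phi>" using assms(2) by (auto simp: iso_def)
  show ?thesis
    unfolding sigma_eq_card_isos by (rule card_isos_iso_invariant[OF assms(1,1) \<phi> \<phi>])
qed

lemma card_isos:
  assumes closed: "succ_closed a"
  shows "card (isos a b) = (if iso a b then sigma a else 0)"
proof (cases "iso a b")
  case True
  then obtain \<phi> where \<phi>: "is_iso a b \<phi>" by (auto simp: iso_def)
  have "card (isos a a) = card (isos a b)"
    by (rule card_isos_iso_invariant[OF closed succ_closed_is_iso[OF closed \<phi>]
          is_iso_id is_iso_inv_into[OF closed \<phi>]])
  then show ?thesis using True by (simp add: sigma_eq_card_isos)
next
  case False
  then show ?thesis using isos_nonempty_iff[OF closed, of b] by simp
qed

lemma pairing_basis_right: "pairing f (basis t) = f (iso_class t) * of_nat (sigma (rep (iso_class t)))"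
proof (cases "f (iso_class t) = 0")
  case True
  then have empty: "{X. f X \<noteq> 0 \<and> basis t X \<noteq> (0::'a)} = {}" by (auto simp: basis_def)
  show ?thesis using True unfolding pairing_def empty by simp
next
  case False
  then have "{X. f X \<noteq> 0 \<and> basis t X \<noteq> (0::'a)} = {iso_class t}" by (auto simp: basis_def)
  then show ?thesis by (simp add: pairing_def basis_def)
qed

lemma pairing_basis_left: "pairing (basis t) g = g (iso_class t) * of_nat (sigma (rep (iso_class t)))"
proof (cases "g (iso_class t) = 0")
  case True
  then have empty: "{X. basis t X \<noteq> (0::'a) \<and> g X \<noteq> 0} = {}" by (auto simp: basis_def)
  show ?thesis using True unfolding pairing_def empty by simp
next
  case False
  then have "{X. basis t X \<noteq> (0::'a) \<and> g X \<noteq> 0} = {iso_class t}" by (auto simp: basis_def)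
  then show ?thesis by (simp add: pairing_def basis_def)
qed

lemma sigma_rep_iso_class: "succ_closed t \<Longrightarrow> sigma (rep (iso_class t)) = sigma t"
  using sigma_iso iso_rep_iso_class by blast

lemma iso_commute: "succ_closed a \<Longrightarrow> succ_closed b \<Longrightarrow> iso a b \<longleftrightarrow> iso b a"
  using iso_sym by blast

lemma basis_iso_class:
  assumes "succ_closed a" "succ_closed b"
  shows "basis a (iso_class b) = of_bool (iso a b)"
proof -
  have "iso_class b = iso_class a \<longleftrightarrow> iso a b" using iso_class_eq_iff[OF assms] by metis
  then show ?thesis by (simp add: basis_def)
qed

lemma delta_iso_class:
  assumes "succ_closed a" "succ_closed b"
  shows "delta a (iso_class b) = of_nat (card {v \<in> {..<nv a}. iso (add_free a v) b})"
  using assms by (simp add: delta_def basis_iso_class sum_of_bool_eq Int_def)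

lemma deltabar_iso_class:
  assumes "succ_closed a" "succ_closed b"
  shows "deltabar b (iso_class a) = of_nat (card {w \<in> {..<nv b}. fr b w \<noteq> 0 \<and> iso a (rem_free b w)})"
proof -
  have "deltabar b (iso_class a) = (\<Sum>w<nv b. of_bool (fr b w \<noteq> 0 \<and> iso a (rem_free b w)))"
    unfolding deltabar_def using assms
    by (intro sum.cong) (auto simp: basis_iso_class iso_commute[of a])
  then show ?thesis by (simp add: sum_of_bool_eq Int_def)
qed

lemma is_iso_add_free_iff:
  assumes v: "v < nv a"
  shows "is_iso (add_free a v) b \<phi> \<longleftrightarrow> fr b (\<phi> v) \<noteq> 0 \<and> is_iso a (rem_free b (\<phi> v)) \<phi>"
proof (cases "bij_betw \<phi> {..<nv a} {..<nv b}")
  case True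
  then have neq: "\<phi> u \<noteq> \<phi> v" if "u < nv a" "u \<noteq> v" for u
    using v that by (auto simp: bij_betw_def dest: inj_onD)
  define others where "others \<longleftrightarrow> (\<forall>u<nv a. u \<noteq> v \<longrightarrow> fr b (\<phi> u) = fr a u)"
  have "(\<forall>u<nv a. fr b (\<phi> u) = ((fr a)(v := fr a v + 1)) u) \<longleftrightarrow>
      fr b (\<phi> v) = fr a v + 1 \<and> others"
    unfolding others_def using v by auto
  moreover have "(\<forall>u<nv a. ((fr b)(\<phi> v := fr b (\<phi> v) - 1)) (\<phi> u) = fr a u) \<longleftrightarrow>
      fr b (\<phi> v) - 1 = fr a v \<and> others"
    unfolding others_def using v neq by auto
  moreover have "fr b (\<phi> v) = fr a v + 1 \<longleftrightarrow> fr b (\<phi> v) \<noteq> 0 \<and> fr b (\<phi> v) - 1 = fr a v"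
    by arith
  ultimately show ?thesis unfolding is_iso_iff add_free_sel rem_free_sel by blast
qed (simp add: is_iso_def)

lemma card_Sigma_isos_add_free_eq:
  "card (SIGMA v:{..<nv a}. isos (add_free a v) b) =
   card (SIGMA w:{w \<in> {..<nv b}. fr b w \<noteq> 0}. isos a (rem_free b w))"
  (is "card ?P = card ?Q")
proof (rule bij_betw_same_card)
  let ?inv = "\<lambda>\<phi>. inv_into {..<nv a} \<phi>"
  have bij: "bij_betw \<phi> {..<nv a} {..<nv b}" if "is_iso a (rem_free b w) \<phi>" for w \<phi>
    using is_iso_bij_betw[OF that] by simp
  show "bij_betw (\<lambda>(v, \<phi>). (\<phi> v, \<phi>)) ?P ?Q"
  proof (rule bij_betw_byWitness[where f' = "\<lambda>(w, \<phi>). (?inv \<phi> w, \<phi>)"])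
    show "\<forall>p\<in>?P. (\<lambda>(w, \<phi>). (?inv \<phi> w, \<phi>)) ((\<lambda>(v, \<phi>). (\<phi> v, \<phi>)) p) = p"
      using bij by (auto simp: isos_def is_iso_add_free_iff bij_betw_def)
    show "\<forall>q\<in>?Q. (\<lambda>(v, \<phi>). (\<phi> v, \<phi>)) ((\<lambda>(w, \<phi>). (?inv \<phi> w, \<phi>)) q) = q"
      using bij by (auto simp: isos_def bij_betw_def f_inv_into_f)
    show "(\<lambda>(v, \<phi>). (\<phi> v, \<phi>)) ` ?P \<subseteq> ?Q"
      by (auto simp: isos_def is_iso_add_free_iff PiE_iff)
    show "(\<lambda>(w, \<phi>). (?inv \<phi> w, \<phi>)) ` ?Q \<subseteq> ?P"
    proof (clarsimp simp: isos_def)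
      fix w \<phi> assume w: "w < nv b" "0 < fr b w" and \<phi>: "\<phi> \<in> {..<nv a} \<rightarrow>\<^sub>E {..<nv b}"
        "is_iso a (rem_free b w) \<phi>"
      have im: "\<phi> ` {..<nv a} = {..<nv b}" using bij[OF \<phi>(2)] by (simp add: bij_betw_def)
      have "?inv \<phi> w < nv a" using im w by (metis inv_into_into lessThan_iff)
      moreover have "\<phi> (?inv \<phi> w) = w" using im w by (simp add: f_inv_into_f)
      ultimately show "?inv \<phi> w < nv a \<and> is_iso (add_free a (?inv \<phi> w)) b \<phi>"
        using w \<phi> is_iso_add_free_iff[of "?inv \<phi> w" a b \<phi>] by simp
    qed
  qed
qed

lemma card_Sigma_isos_fixed_target:
  assumes "finite A" "\<And>v. v \<in> A \<Longrightarrow> succ_closed (f v)"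
  shows "card (SIGMA v:A. isos (f v) b) = card {v \<in> A. iso (f v) b} * sigma b"
proof -
  have "card (isos (f v) b) = (if iso (f v) b then sigma b else 0)" if "v \<in> A" for v
    using card_isos[OF assms(2)[OF that]] sigma_iso[OF assms(2)[OF that]] by simp
  then have "card (SIGMA v:A. isos (f v) b) = (\<Sum>v\<in>A. if iso (f v) b then sigma b else 0)"
    using assms(1) by (simp add: card_SigmaI finite_isos)
  then show ?thesis using assms(1) by (simp add: sum.inter_filter[symmetric])
qed

lemma card_Sigma_isos_fixed_source:
  assumes "finite A" "succ_closed a"
  shows "card (SIGMA v:A. isos a (g v)) = card {v \<in> A. iso a (g v)} * sigma a"
  using assms by (simp add: card_SigmaI finite_isos card_isos sum.inter_filter[symmetric])

lemma pairing_delta_basis_eq: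
  assumes "succ_closed a" "succ_closed b"
  shows "pairing (delta a) (basis b) = (pairing (basis a) (deltabar b) :: 'k::field)"
proof -
  have "pairing (delta a) (basis b) =
      (of_nat (card {v \<in> {..<nv a}. iso (add_free a v) b} * sigma b) :: 'k)"
    using assms by (simp add: pairing_basis_right delta_iso_class sigma_rep_iso_class)
  also have "\<dots> = of_nat (card {w \<in> {..<nv b}. fr b w \<noteq> 0 \<and> iso a (rem_free b w)} * sigma a)"
    using card_Sigma_isos_add_free_eq[of a b] assms
      card_Sigma_isos_fixed_target[of "{..<nv a}" "add_free a" b]
      card_Sigma_isos_fixed_source[of "{w \<in> {..<nv b}. fr b w \<noteq> 0}" a "rem_free b"]
    by (simp add: conj_assoc)
  also have "\<dots> = pairing (basis a) (deltabar b)"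
    using assms by (simp add: pairing_basis_left deltabar_iso_class sigma_rep_iso_class)
  finally show ?thesis .
qed

definition vertex_var :: "'c fobj \<Rightarrow> nat \<Rightarrow> 'c \<times> int" where
  "vertex_var t v = (dec t v, int (fertility t v) + int (fr t v) - 1)"

lemma Phi_eq_image_mset: "Phi t = image_mset (vertex_var t) (mset_set {..<nv t})"
  by (simp add: Phi_def vertex_var_def[abs_def])

lemma fertility_is_iso:
  assumes closed: "succ_closed a" and \<phi>: "is_iso a b \<phi>" and v: "v < nv a"
  shows "fertility b (\<phi> v) = fertility a v"
proof -
  have bij: "bij_betw \<phi> {..<nv a} {..<nv b}" using \<phi> by (rule is_iso_bij_betw)
  have "succ b (\<phi> u) = Some (\<phi> v) \<longleftrightarrow> succ a u = Some v" if "u < nv a" for u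
  proof -
    have "succ b (\<phi> u) = map_option \<phi> (succ a u)" using \<phi> that by (simp add: is_iso_def)
    moreover have "\<phi> w = \<phi> v \<longleftrightarrow> w = v" if "succ a u = Some w" for w
      using bij closed \<open>u < nv a\<close> that v unfolding succ_closed_def bij_betw_def
      by (meson inj_on_contraD lessThan_iff)
    ultimately show ?thesis by (cases "succ a u") auto
  qed
  then have "{u. u < nv b \<and> succ b u = Some (\<phi> v)} = \<phi> ` {u. u < nv a \<and> succ a u = Some v}"
    using bij unfolding bij_betw_def by (auto simp: image_iff) (metis lessThan_iff imageE)
  moreover have "inj_on \<phi> {u. u < nv a \<and> succ a u = Some v}"
    using bij by (auto simp: bij_betw_def intro: inj_on_subset)
  ultimately show ?thesis by (simp add: fertility_def card_image)
qed

lemma Phi_is_iso: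
  assumes closed: "succ_closed a" and \<phi>: "is_iso a b \<phi>"
  shows "Phi b = Phi a"
proof -
  have bij: "bij_betw \<phi> {..<nv a} {..<nv b}" using \<phi> by (rule is_iso_bij_betw)
  have "vertex_var b (\<phi> v) = vertex_var a v" if "v < nv a" for v
    using \<phi> that fertility_is_iso[OF closed \<phi> that] by (simp add: vertex_var_def is_iso_def)
  then have "image_mset (vertex_var b \<circ> \<phi>) (mset_set {..<nv a}) = Phi a"
    unfolding Phi_eq_image_mset by (intro image_mset_cong) simp
  moreover have "mset_set {..<nv b} = image_mset \<phi> (mset_set {..<nv a})"
    using bij by (simp add: bij_betw_def image_mset_mset_set)
  ultimately show ?thesis by (simp add: Phi_eq_image_mset image_mset.compositionality)
qed

lemma Phi_rep_iso_class: "succ_closed t \<Longrightarrow> Phi (rep (iso_class t)) = Phi t"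
  using Phi_is_iso iso_rep_iso_class iso_def by metis

lemma image_mset_fun_upd_mset_set:
  assumes "finite A" "a \<in> A"
  shows "image_mset (g(a := y)) (mset_set A) = image_mset g (mset_set A) - {#g a#} + {#y#}"
proof -
  have "image_mset (g(a := y)) (mset_set (A - {a})) = image_mset g (mset_set (A - {a}))"
    using assms(1) by (intro image_mset_cong) auto
  then show ?thesis using assms by (simp add: mset_set.remove)
qed

lemma Phi_add_free:
  assumes "v < nv t"
  shows "Phi (add_free t v) =
    Phi t - {#vertex_var t v#} + {#(fst (vertex_var t v), snd (vertex_var t v) + 1)#}"
proof -
  have "vertex_var (add_free t v) =
      (vertex_var t)(v := (fst (vertex_var t v), snd (vertex_var t v) + 1))"
    by (auto simp: vertex_var_def fertility_def)
  then show ?thesis using assms by (simp add: Phi_eq_image_mset image_mset_fun_upd_mset_set)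
qed

lemma PhiL_sum_basis:
  fixes s :: "'i \<Rightarrow> 'c fobj"
  assumes "finite I"
  shows "PhiL (\<lambda>X. \<Sum>i\<in>I. basis (s i) X :: 'k::field) m =
    (\<Sum>i\<in>I. mono (Phi (rep (iso_class (s i)))) m)"
proof -
  let ?g = "\<lambda>X. mono (Phi (rep X)) m"
  let ?S = "(\<lambda>i. iso_class (s i)) ` I"
  have "X \<in> ?S" if nonzero: "(\<Sum>i\<in>I. basis (s i) X) \<noteq> (0::'k)" for X
  proof -
    obtain i where "i \<in> I" "basis (s i) X \<noteq> (0::'k)"
      using sum.not_neutral_contains_not_neutral[OF nonzero] by blast
    then show ?thesis by (auto simp: basis_def split: if_splits)
  qed
  then have "PhiL (\<lambda>X. \<Sum>i\<in>I. basis (s i) X :: 'k) m =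
      (\<Sum>X\<in>?S. (\<Sum>i\<in>I. basis (s i) X) * ?g X)"
    unfolding PhiL_def using assms by (intro sum.mono_neutral_left) auto
  also have "\<dots> = (\<Sum>i\<in>I. \<Sum>X\<in>?S. basis (s i) X * ?g X)"
    by (simp add: sum_distrib_right sum.swap[of _ ?S])
  also have "\<dots> = (\<Sum>i\<in>I. ?g (iso_class (s i)))"
  proof (rule sum.cong[OF refl])
    fix i assume "i \<in> I"
    have "(\<Sum>X\<in>?S. basis (s i) X * ?g X) = (\<Sum>X\<in>?S. if X = iso_class (s i) then ?g X else 0)"
      by (intro sum.cong) (simp_all add: basis_def)
    then show "(\<Sum>X\<in>?S. basis (s i) X * ?g X) = ?g (iso_class (s i))"
      using assms \<open>i \<in> I\<close> by (simp add: sum.delta)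
  qed
  finally show ?thesis .
qed

lemma PhiL_delta:
  assumes "succ_closed t"
  shows "PhiL (delta t :: 'c fobj set \<Rightarrow> 'k::field) m = (\<Sum>v<nv t. mono (Phi (add_free t v)) m)"
  using assms unfolding delta_def by (simp add: PhiL_sum_basis Phi_rep_iso_class)

lemma Dpoly_mono: "Dpoly (mono M :: _ \<Rightarrow> 'k::field) = Dmon M"
proof -
  have "{m. (mono M m :: 'k) \<noteq> 0} = {M}" by (auto simp: mono_def)
  then show ?thesis by (simp add: Dpoly_def mono_def)
qed

lemma sum_comp_eq_sum_count_image_mset:
  fixes h :: "'b \<Rightarrow> 'r::comm_semiring_1"
  assumes "finite A"
  shows "(\<Sum>a\<in>A. h (g a)) =
    (\<Sum>y\<in>set_mset (image_mset g (mset_set A)). of_nat (count (image_mset g (mset_set A)) y) * h y)"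
proof -
  have "(\<Sum>a\<in>A. h (g a)) = (\<Sum>y\<in>g ` A. \<Sum>a\<in>{a \<in> A. g a = y}. h (g a))"
    by (rule sum.image_gen[OF assms])
  also have "\<dots> = (\<Sum>y\<in>g ` A. of_nat (card {a \<in> A. g a = y}) * h y)"
    by (intro sum.cong) auto
  also have "\<dots> = (\<Sum>y\<in>g ` A. of_nat (count (image_mset g (mset_set A)) y) * h y)"
    using assms
    by (intro sum.cong) (simp_all add: count_image_mset' Collect_conj_eq Int_commute eq_commute)
  finally show ?thesis using assms by simp
qed

lemma PhiL_delta_eq_Dpoly:
  assumes "succ_closed t"
  shows "PhiL (delta t :: 'c fobj set \<Rightarrow> 'k::field) = Dpoly (mono (Phi t))"
proof
  fix m
  have "PhiL (delta t :: 'c fobj set \<Rightarrow> 'k) m =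
      (\<Sum>v<nv t. mono (Phi t - {#vertex_var t v#} +
        {#(fst (vertex_var t v), snd (vertex_var t v) + 1)#}) m)"
    using assms by (simp add: PhiL_delta Phi_add_free)
  also have "\<dots> = Dmon (Phi t) m"
    unfolding Dmon_def Phi_eq_image_mset by (rule sum_comp_eq_sum_count_image_mset) simp
  finally show "PhiL (delta t :: 'c fobj set \<Rightarrow> 'k) m = Dpoly (mono (Phi t)) m"
    by (simp add: Dpoly_mono)
qed

theorem proposition4p8:
  fixes t1 t2 t :: "'c::finite fobj"
  assumes "(is_aroma t1 \<and> is_aroma t2) \<or> (is_tree t1 \<and> is_tree t2)"
    and "is_aroma t \<or> is_tree t"
  shows "pairing (delta t1) (basis t2) = (pairing (basis t1) (deltabar t2) :: 'k::field_char_0)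
    \<and> PhiL (delta t :: 'c fobj set \<Rightarrow> 'k) = Dpoly (mono (Phi t))"
proof
  have "succ_closed t1" "succ_closed t2"
    using assms(1) succ_closed_if_aroma succ_closed_if_tree by blast+
  then show "pairing (delta t1) (basis t2) = (pairing (basis t1) (deltabar t2) :: 'k)"
    by (rule pairing_delta_basis_eq)
  have "succ_closed t"
    using assms(2) succ_closed_if_aroma succ_closed_if_tree by blast
  then show "PhiL (delta t :: 'c fobj set \<Rightarrow> 'k) = Dpoly (mono (Phi t))"
    by (rule PhiL_delta_eq_Dpoly)
qed

end
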